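(* Let $M$ be a $3$-connected simple matroid with a $3$-connected simple minor $N$, and suppose $r(M)\ge 4$. If $X$ is the hull of an $N$-carambole of $M$, then $X$ is an independent set of $M$ and every element of $X$ is $N$-contractible in $M$.
   Context: An element $x$ is $N$-contractible in $M$ if $M/x$ is a $3$-connected matroid with an $N$-minor; a set $Y$ is vertically $N$-contractible if $\mathrm{si}(M/Y)$ (the simplification) is a $3$-connected matroid with an $N$-minor. A line is a rank-$2$ set. For $n\ge3$, a sequence $x_1,\dots,x_n,y_1,\dots,y_n$ of elements of $M$ is an $N$-carambole of $M$ if $L:=\{y_1,\dots,y_n\}$ is a vertically $N$-contractible line of $M$ with $n$ distinct elements and, for each $i$, $(L-y_i)\cup x_i$ is a cocircuit of $M$; $X:=\{x_1,\dots,x_n\}$ is its hull. *)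

theory Defs
  imports Main
begin

type_synonym 'a matroid = "'a set \<times> ('a set \<Rightarrow> bool)"

definition gr :: "'a matroid \<Rightarrow> 'a set" where "gr M = fst M"
definition ind :: "'a matroid \<Rightarrow> 'a set \<Rightarrow> bool" where "ind M = snd M"

definition is_matroid :: "'a matroid \<Rightarrow> bool" where
  "is_matroid M \<longleftrightarrow> finite (gr M) \<and> ind M {}
     \<and> (\<forall>I. ind M I \<longrightarrow> I \<subseteq> gr M)
     \<and> (\<forall>I J. ind M J \<and> I \<subseteq> J \<longrightarrow> ind M I)
     \<and> (\<forall>I J. ind M I \<and> ind M J \<and> card I < card J \<longrightarrow> (\<exists>e\<in>J - I. ind M (insert e I)))"

definition rk :: "'a matroid \<Rightarrow> 'a set \<Rightarrow> nat" where
  "rk M X = Max (card ` {I. I \<subseteq> X \<and> ind M I})"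

definition contract :: "'a matroid \<Rightarrow> 'a set \<Rightarrow> 'a matroid" where
  "contract M X = (gr M - X, \<lambda>I. I \<subseteq> gr M - X \<and> rk M (I \<union> X) = card I + rk M X)"

definition delete :: "'a matroid \<Rightarrow> 'a set \<Rightarrow> 'a matroid" where
  "delete M X = (gr M - X, \<lambda>I. ind M I \<and> I \<inter> X = {})"

definition restrict :: "'a matroid \<Rightarrow> 'a set \<Rightarrow> 'a matroid" where
  "restrict M S = delete M (gr M - S)"

definition is_minor :: "'a matroid \<Rightarrow> 'a matroid \<Rightarrow> bool" where
  "is_minor M' M \<longleftrightarrow> (\<exists>C D. C \<subseteq> gr M \<and> D \<subseteq> gr M \<and> C \<inter> D = {} \<and> M' = delete (contract M C) D)"

definition iso :: "'a matroid \<Rightarrow> 'b matroid \<Rightarrow> bool" where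
  "iso M N \<longleftrightarrow> (\<exists>f. bij_betw f (gr M) (gr N) \<and> (\<forall>I\<subseteq>gr M. ind M I \<longleftrightarrow> ind N (f ` I)))"

definition has_minor :: "'a matroid \<Rightarrow> 'b matroid \<Rightarrow> bool" where
  "has_minor M N \<longleftrightarrow> (\<exists>M'. is_minor M' M \<and> iso M' N)"

definition separation :: "'a matroid \<Rightarrow> nat \<Rightarrow> 'a set \<Rightarrow> 'a set \<Rightarrow> bool" where
  "separation M k A B \<longleftrightarrow> A \<union> B = gr M \<and> A \<inter> B = {} \<and> card A \<ge> k \<and> card B \<ge> k
     \<and> rk M A + rk M B + 1 \<le> rk M (gr M) + k"

definition n_connected :: "'a matroid \<Rightarrow> nat \<Rightarrow> bool" where
  "n_connected M n \<longleftrightarrow> (\<forall>k. 1 \<le> k \<and> k < n \<longrightarrow> \<not> (\<exists>A B. separation M k A B))"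

definition simple :: "'a matroid \<Rightarrow> bool" where
  "simple M \<longleftrightarrow> (\<forall>X\<subseteq>gr M. card X \<le> 2 \<longrightarrow> ind M X)"

definition basis :: "'a matroid \<Rightarrow> 'a set \<Rightarrow> bool" where
  "basis M B \<longleftrightarrow> ind M B \<and> (\<forall>X. ind M X \<and> B \<subseteq> X \<longrightarrow> X = B)"

definition circuit :: "'a matroid \<Rightarrow> 'a set \<Rightarrow> bool" where
  "circuit M C \<longleftrightarrow> C \<subseteq> gr M \<and> \<not> ind M C \<and> (\<forall>x\<in>C. ind M (C - {x}))"

definition dual :: "'a matroid \<Rightarrow> 'a matroid" where
  "dual M = (gr M, \<lambda>I. I \<subseteq> gr M \<and> (\<exists>B. basis M B \<and> I \<inter> B = {}))"

definition cocircuit :: "'a matroid \<Rightarrow> 'a set \<Rightarrow> bool" where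
  "cocircuit M C \<longleftrightarrow> circuit (dual M) C"

text \<open>S is the ground set of a simplification of M: no loops, one element from each
  parallel class of non-loops.\<close>
definition is_simplification :: "'a matroid \<Rightarrow> 'a set \<Rightarrow> bool" where
  "is_simplification M S \<longleftrightarrow> S \<subseteq> gr M \<and> (\<forall>s\<in>S. ind M {s})
     \<and> (\<forall>s\<in>S. \<forall>t\<in>S. s \<noteq> t \<longrightarrow> ind M {s, t})
     \<and> (\<forall>e\<in>gr M. ind M {e} \<longrightarrow> (\<exists>s\<in>S. e = s \<or> \<not> ind M {e, s}))"

definition N_contractible :: "'a matroid \<Rightarrow> 'b matroid \<Rightarrow> 'a \<Rightarrow> bool" where
  "N_contractible M N x \<longleftrightarrow> x \<in> gr M \<and> n_connected (contract M {x}) 3 \<and> has_minor (contract M {x}) N"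

definition vert_N_contractible :: "'a matroid \<Rightarrow> 'b matroid \<Rightarrow> 'a set \<Rightarrow> bool" where
  "vert_N_contractible M N Y \<longleftrightarrow> Y \<subseteq> gr M \<and>
     (\<exists>S. is_simplification (contract M Y) S
        \<and> n_connected (restrict (contract M Y) S) 3 \<and> has_minor (restrict (contract M Y) S) N)"

text \<open>N-carambole x_0..x_{n-1}, y_0..y_{n-1} (0-indexed).\<close>
definition carambole :: "'a matroid \<Rightarrow> 'b matroid \<Rightarrow> nat \<Rightarrow> (nat \<Rightarrow> 'a) \<Rightarrow> (nat \<Rightarrow> 'a) \<Rightarrow> bool" where
  "carambole M N n x y \<longleftrightarrow> n \<ge> 3 \<and> (\<forall>i<n. x i \<in> gr M \<and> y i \<in> gr M) \<and> inj_on y {..<n}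
     \<and> rk M (y ` {..<n}) = 2 \<and> vert_N_contractible M N (y ` {..<n})
     \<and> (\<forall>i<n. cocircuit M ((y ` {..<n} - {y i}) \<union> {x i}))"

definition hull :: "nat \<Rightarrow> (nat \<Rightarrow> 'a) \<Rightarrow> 'a set" where
  "hull n x = x ` {..<n}"

end

theory Submission
  imports Defs "HOL-Combinatorics.Transposition"
begin

text \<open>Each cocircuit \<open>C\<^sub>i = (L - y\<^sub>i) \<union> x\<^sub>i\<close> meets the hull only in \<open>x\<^sub>i\<close>, and the
  complement of a cocircuit is a hyperplane, so adding the \<open>x\<^sub>i\<close> one at a time raises the rank
  every time: the hull is independent. Transposing \<open>x\<^sub>i\<close> with another point \<open>y\<^sub>j\<close> of the line
  \<open>L\<close> matches the ranks of \<open>M / L\<close> on \<open>E - L\<close> with those of \<open>M / {x\<^sub>i, y\<^sub>i}\<close>, so every minor of a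
  restriction of \<open>M / L\<close> is a minor of \<open>M / x\<^sub>i\<close>. Finally, a 2-separation \<open>(A, B)\<close> of \<open>M / x\<^sub>i\<close>
  has \<open>x\<^sub>i\<close> spanned by both sides; a side containing two points of \<open>L\<close> absorbs the whole line,
  and as \<open>r(E - L) = r(M) \<ge> 4\<close> this yields a 2-separation of \<open>M\<close>, unless the other side together
  with \<open>x\<^sub>i\<close> is a triangle \<open>{x\<^sub>i, y\<^sub>j, b}\<close>, which a third cocircuit \<open>C\<^sub>k\<close> excludes.\<close>

section \<open>Minors in normal form\<close>

lemma matroid_eqI: "gr A = gr B \<Longrightarrow> (\<And>I. ind A I \<longleftrightarrow> ind B I) \<Longrightarrow> A = B"
  by (auto simp: gr_def ind_def intro: prod_eqI)

lemma gr_contract [simp]: "gr (contract M X) = gr M - X"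
  by (simp add: contract_def gr_def)

lemma ind_contract: "ind (contract M X) I \<longleftrightarrow> I \<subseteq> gr M - X \<and> rk M (I \<union> X) = card I + rk M X"
  by (simp add: contract_def gr_def ind_def)

lemma gr_delete [simp]: "gr (delete M X) = gr M - X"
  by (simp add: delete_def gr_def)

lemma ind_delete: "ind (delete M X) I \<longleftrightarrow> ind M I \<and> I \<inter> X = {}"
  by (simp add: delete_def gr_def ind_def)

lemma gr_dual [simp]: "gr (dual M) = gr M"
  by (simp add: dual_def gr_def)

lemma ind_dual: "ind (dual M) I \<longleftrightarrow> I \<subseteq> gr M \<and> (\<exists>B. basis M B \<and> I \<inter> B = {})"
  by (simp add: dual_def gr_def ind_def)

lemma rk_delete: "A \<inter> D = {} \<Longrightarrow> rk (delete M D) A = rk M A"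
  unfolding rk_def ind_delete by (metis (lifting) disjoint_iff subset_iff)

text \<open>The minor \<open>M / K\<close> restricted to \<open>G\<close>; every minor of \<open>M\<close> has this form.\<close>
definition minor_on :: "'a matroid \<Rightarrow> 'a set \<Rightarrow> 'a set \<Rightarrow> 'a matroid" where
  "minor_on M K G = delete (contract M K) (gr M - K - G)"

lemma gr_minor_on [simp]: "gr (minor_on M K G) = (gr M - K) \<inter> G"
  by (auto simp: minor_on_def)

lemma ind_minor_on:
  "ind (minor_on M K G) I \<longleftrightarrow> I \<subseteq> (gr M - K) \<inter> G \<and> rk M (I \<union> K) = card I + rk M K"
  by (auto simp: minor_on_def ind_delete ind_contract)

lemma restrict_contract_eq_minor_on: "restrict (contract M X) S = minor_on M X S"
  by (simp add: restrict_def minor_on_def)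

lemma is_minor_minor_on: "K \<subseteq> gr M \<Longrightarrow> is_minor (minor_on M K G) M"
  unfolding is_minor_def minor_on_def by (intro exI[of _ K] exI[of _ "gr M - K - G"]) auto

lemma iso_trans:
  assumes "iso A B" "iso B C"
  shows "iso A C"
proof -
  obtain f where f: "bij_betw f (gr A) (gr B)" "\<And>I. I \<subseteq> gr A \<Longrightarrow> ind A I \<longleftrightarrow> ind B (f ` I)"
    using assms(1) unfolding iso_def by blast
  obtain g where g: "bij_betw g (gr B) (gr C)" "\<And>I. I \<subseteq> gr B \<Longrightarrow> ind B I \<longleftrightarrow> ind C (g ` I)"
    using assms(2) unfolding iso_def by blast
  have "ind A I \<longleftrightarrow> ind C ((g \<circ> f) ` I)" if "I \<subseteq> gr A" for I
    using that f g(2)[of "f ` I"] bij_betw_imp_surj_on[OF f(1)] by (auto simp: image_comp)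
  then show ?thesis
    unfolding iso_def using bij_betw_trans[OF f(1) g(1)] by blast
qed

lemma iso_sym:
  assumes "iso A B"
  shows "iso B A"
proof -
  obtain f where f: "bij_betw f (gr A) (gr B)" "\<And>I. I \<subseteq> gr A \<Longrightarrow> ind A I \<longleftrightarrow> ind B (f ` I)"
    using assms unfolding iso_def by blast
  let ?g = "the_inv_into (gr A) f"
  have g: "bij_betw ?g (gr B) (gr A)"
    using f(1) by (rule bij_betw_the_inv_into)
  have "ind B J \<longleftrightarrow> ind A (?g ` J)" if J: "J \<subseteq> gr B" for J
  proof -
    have "f ` (?g ` J) = J"
      using J f_the_inv_into_f_bij_betw[OF f(1)] by (force simp: image_image)
    moreover have "?g ` J \<subseteq> gr A"
      using J g bij_betw_imp_surj_on by blast
    ultimately show ?thesis using f(2) by metis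
  qed
  then show ?thesis unfolding iso_def using g by blast
qed

lemma iso_minor_on:
  assumes inj: "inj_on f G" and G: "G \<subseteq> gr M - K" and fG: "f ` G \<subseteq> gr M' - K'"
    and rk: "\<And>I. I \<subseteq> G \<Longrightarrow> rk M' (f ` I \<union> K') = rk M (I \<union> K)"
  shows "iso (minor_on M K G) (minor_on M' K' (f ` G))"
  unfolding iso_def
proof (intro exI conjI allI impI)
  have "gr (minor_on M K G) = G" "gr (minor_on M' K' (f ` G)) = f ` G"
    using G fG by auto
  then show "bij_betw f (gr (minor_on M K G)) (gr (minor_on M' K' (f ` G)))"
    using inj by (simp add: bij_betw_def)
  fix I assume "I \<subseteq> gr (minor_on M K G)"
  then have I: "I \<subseteq> G" by simp
  have "card (f ` I) = card I"
    using inj_on_subset[OF inj I] by (rule card_image)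
  then show "ind (minor_on M K G) I \<longleftrightarrow> ind (minor_on M' K' (f ` G)) (f ` I)"
    using I G fG rk[OF I] rk[of "{}"] by (auto simp: ind_minor_on)
qed

section \<open>Rank, cocircuits and contraction\<close>

locale matroid =
  fixes M :: "'a matroid"
  assumes is_matroid: "is_matroid M"
begin

abbreviation "E \<equiv> gr M"
abbreviation "r \<equiv> rk M"

lemma finite_ground: "finite E"
  using is_matroid by (simp add: is_matroid_def)

lemma ind_empty: "ind M {}"
  using is_matroid by (simp add: is_matroid_def)

lemma ind_subset_ground: "ind M I \<Longrightarrow> I \<subseteq> E"
  using is_matroid by (simp add: is_matroid_def)

lemma ind_finite: "ind M I \<Longrightarrow> finite I"
  using ind_subset_ground finite_ground finite_subset by blast

lemma ind_subset: "ind M J \<Longrightarrow> I \<subseteq> J \<Longrightarrow> ind M I"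
  using is_matroid unfolding is_matroid_def by blast

lemma ind_augment: "ind M I \<Longrightarrow> ind M J \<Longrightarrow> card I < card J \<Longrightarrow> \<exists>e\<in>J - I. ind M (insert e I)"
  using is_matroid unfolding is_matroid_def by blast

lemma finite_ind_subsets: "finite {I. I \<subseteq> X \<and> ind M I}"
  by (rule finite_subset[of _ "Pow E"]) (use ind_subset_ground finite_ground in auto)

lemma card_le_rk: "I \<subseteq> X \<Longrightarrow> ind M I \<Longrightarrow> card I \<le> r X"
  unfolding rk_def using finite_ind_subsets by (intro Max_ge) auto

lemma obtain_ind_card_rk:
  obtains I where "I \<subseteq> X" "ind M I" "card I = r X"
proof -
  have "r X \<in> card ` {I. I \<subseteq> X \<and> ind M I}"
    unfolding rk_def using finite_ind_subsets ind_empty by (intro Max_in) auto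
  then show ?thesis using that by auto
qed

lemma rk_le_card: "finite X \<Longrightarrow> r X \<le> card X"
  by (metis obtain_ind_card_rk card_mono)

lemma rk_mono: "X \<subseteq> Y \<Longrightarrow> r X \<le> r Y"
  by (metis card_le_rk dual_order.trans obtain_ind_card_rk)

lemma rk_empty: "r {} = 0"
  using rk_le_card[of "{}"] by simp

lemma ind_iff_rk: "I \<subseteq> E \<Longrightarrow> ind M I \<longleftrightarrow> r I = card I"
proof
  assume "I \<subseteq> E" "ind M I"
  then show "r I = card I" using card_le_rk[of I I] rk_le_card[of I] ind_finite[of I] by simp
next
  assume I: "I \<subseteq> E" "r I = card I"
  obtain J where J: "J \<subseteq> I" "ind M J" "card J = r I" by (rule obtain_ind_card_rk)
  have "finite I" using I finite_ground finite_subset by blast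
  then have "J = I" using J I card_subset_eq by simp
  then show "ind M I" using J by simp
qed

lemma ind_extend_to_rk:
  assumes "ind M I" "I \<subseteq> X"
  shows "\<exists>J. I \<subseteq> J \<and> J \<subseteq> X \<and> ind M J \<and> card J = r X"
  using assms
proof (induction "r X - card I" arbitrary: I rule: less_induct)
  case less
  show ?case
  proof (cases "card I < r X")
    case False
    then show ?thesis using less.prems card_le_rk[of I X] by auto
  next
    case True
    obtain K where K: "K \<subseteq> X" "ind M K" "card K = r X" by (rule obtain_ind_card_rk)
    then obtain e where e: "e \<in> K - I" "ind M (insert e I)"
      using ind_augment[OF less.prems(1) K(2)] True by auto
    have "card (insert e I) = Suc (card I)"
      using e ind_finite[OF less.prems(1)] by simp
    then have "r X - card (insert e I) < r X - card I" using True by simp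
    moreover have "insert e I \<subseteq> X" using e K(1) less.prems(2) by blast
    ultimately have "\<exists>J. insert e I \<subseteq> J \<and> J \<subseteq> X \<and> ind M J \<and> card J = r X"
      using less.hyps e(2) by blast
    then show ?thesis by blast
  qed
qed

lemma rk_submod: "r (A \<union> B) + r (A \<inter> B) \<le> r A + r B"
proof -
  obtain I where I: "I \<subseteq> A \<inter> B" "ind M I" "card I = r (A \<inter> B)" by (rule obtain_ind_card_rk)
  obtain J where J: "I \<subseteq> J" "J \<subseteq> A \<union> B" "ind M J" "card J = r (A \<union> B)"
    using ind_extend_to_rk[OF I(2), of "A \<union> B"] I(1) by blast
  have fJ: "finite J" using J ind_finite by blast
  have "card (J \<inter> (A \<inter> B)) \<le> card I"
    using card_le_rk[of "J \<inter> (A \<inter> B)" "A \<inter> B"] ind_subset[OF J(3)] I(3) by auto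
  moreover have "I \<subseteq> J \<inter> (A \<inter> B)" using I(1) J(1) by blast
  ultimately have "J \<inter> (A \<inter> B) = I" using fJ card_seteq[of "J \<inter> (A \<inter> B)" I] by blast
  then have JAB: "(J \<inter> A) \<inter> (J \<inter> B) = I" by blast
  have JA_JB: "(J \<inter> A) \<union> (J \<inter> B) = J" using J(2) by blast
  have "card (J \<inter> A) + card (J \<inter> B) = card J + card I"
    using card_Un_Int[of "J \<inter> A" "J \<inter> B"] fJ unfolding JAB JA_JB by simp
  moreover have "card (J \<inter> A) \<le> r A" "card (J \<inter> B) \<le> r B"
    using card_le_rk ind_subset[OF J(3)] by auto
  ultimately show ?thesis using I(3) J(4) by linarith
qed

lemma rk_subadd: "r (A \<union> B) \<le> r A + r B"
  using rk_submod[of A B] by linarith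

lemma rk_insert_le: "r (insert z A) \<le> Suc (r A)"
  using rk_subadd[of "{z}" A] rk_le_card[of "{z}"] by simp

lemma card_basis:
  assumes "basis M B"
  shows "card B = r E"
proof (rule ccontr)
  have B: "ind M B" "\<And>X. ind M X \<Longrightarrow> B \<subseteq> X \<Longrightarrow> X = B"
    using assms unfolding basis_def by auto
  assume "card B \<noteq> r E"
  moreover have "card B \<le> r E" using card_le_rk B(1) ind_subset_ground by blast
  moreover obtain K where "K \<subseteq> E" "ind M K" "card K = r E" by (rule obtain_ind_card_rk)
  ultimately obtain e where "e \<in> K - B" "ind M (insert e B)"
    using ind_augment[OF B(1), of K] by force
  then show False using B(2)[of "insert e B"] by blast
qed

lemma dual_ind_iff_rk: "I \<subseteq> E \<Longrightarrow> (\<exists>B. basis M B \<and> I \<inter> B = {}) \<longleftrightarrow> r (E - I) = r E"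
proof
  assume "\<exists>B. basis M B \<and> I \<inter> B = {}"
  then obtain B where B: "basis M B" "I \<inter> B = {}" by blast
  then have "B \<subseteq> E - I" using ind_subset_ground unfolding basis_def by blast
  then have "r E \<le> r (E - I)" using card_le_rk[of B "E - I"] B card_basis unfolding basis_def by auto
  then show "r (E - I) = r E" using rk_mono[of "E - I" E] by simp
next
  assume rEI: "r (E - I) = r E"
  obtain J where J: "J \<subseteq> E - I" "ind M J" "card J = r (E - I)" by (rule obtain_ind_card_rk)
  have "basis M J"
    unfolding basis_def
  proof (intro conjI allI impI)
    fix X assume X: "ind M X \<and> J \<subseteq> X"
    then have "card X \<le> r E" using card_le_rk ind_subset_ground by blast
    then have "card X \<le> card J" using J(3) rEI by simp
    then show "X = J" using X ind_finite card_seteq by blast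
  qed (use J in blast)
  then show "\<exists>B. basis M B \<and> I \<inter> B = {}" using J by blast
qed

lemma cocircuit_rk:
  assumes "cocircuit M C"
  shows rk_compl_cocircuit_less: "r (E - C) < r E"
    and rk_insert_compl_cocircuit: "z \<in> C \<Longrightarrow> r (insert z (E - C)) = r E"
proof -
  have C: "C \<subseteq> E" "\<not> ind (dual M) C" "\<And>z. z \<in> C \<Longrightarrow> ind (dual M) (C - {z})"
    using assms unfolding cocircuit_def circuit_def by auto
  have "r (E - C) \<noteq> r E"
    using C(1,2) dual_ind_iff_rk[of C] by (simp add: ind_dual)
  then show "r (E - C) < r E" using rk_mono[of "E - C" E] by auto
  assume z: "z \<in> C"
  have "r (E - (C - {z})) = r E"
    using C(1) C(3)[OF z] dual_ind_iff_rk[of "C - {z}"] by (auto simp: ind_dual)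
  moreover have "E - (C - {z}) = insert z (E - C)" using z C(1) by blast
  ultimately show "r (insert z (E - C)) = r E" by simp
qed

text \<open>The complement of a cocircuit is a hyperplane.\<close>
lemma rk_insert_cocircuit:
  assumes C: "cocircuit M C" and A: "A \<subseteq> E" "A \<inter> C = {}" and z: "z \<in> C"
  shows "r (insert z A) = Suc (r A)"
proof -
  have AH: "A \<subseteq> E - C" using A by blast
  have "r (insert z A \<union> (E - C)) + r (insert z A \<inter> (E - C)) \<le> r (insert z A) + r (E - C)"
    by (rule rk_submod)
  moreover have "insert z A \<union> (E - C) = insert z (E - C)" "insert z A \<inter> (E - C) = A"
    using AH z by auto
  ultimately have "r E + r A \<le> r (insert z A) + r (E - C)"
    using rk_insert_compl_cocircuit[OF C z] by simp
  then show ?thesis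
    using rk_compl_cocircuit_less[OF C] rk_insert_le[of z A] by linarith
qed

lemma cocircuit_meets_if_rk_insert_eq:
  assumes "cocircuit M C" "z \<in> C" "A \<subseteq> E - {z}" "r (insert z A) = r A"
  shows "A \<inter> (C - {z}) \<noteq> {}"
proof
  assume "A \<inter> (C - {z}) = {}"
  then have "A \<inter> C = {}" using assms(3) by blast
  moreover have "A \<subseteq> E" using assms(3) by blast
  ultimately show False using rk_insert_cocircuit[OF assms(1) _ _ assms(2)] assms(4) by simp
qed

lemma ind_if_cocircuits_meet_singly:
  assumes "F \<subseteq> E" and "\<And>z. z \<in> F \<Longrightarrow> \<exists>C. cocircuit M C \<and> C \<inter> F = {z}"
  shows "ind M F"
proof -
  have "finite F" using assms(1) finite_ground finite_subset by blast
  then have "r F = card F" using assms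
  proof (induction F rule: finite_induct)
    case empty
    then show ?case by (simp add: rk_empty)
  next
    case (insert z F)
    obtain C where C: "cocircuit M C" "C \<inter> insert z F = {z}" using insert.prems(2) by blast
    have "F \<inter> C = {}" using C(2) insert.hyps(2) by auto
    then have "r (insert z F) = Suc (r F)"
      using rk_insert_cocircuit[OF C(1), of F z] C(2) insert.prems(1) by blast
    moreover have "\<exists>C. cocircuit M C \<and> C \<inter> F = {w}" if "w \<in> F" for w
      using insert.prems(2)[of w] that by blast
    ultimately show ?case using insert by simp
  qed
  then show ?thesis using assms(1) ind_iff_rk by blast
qed

lemma rk_contract:
  assumes X: "X \<subseteq> E" and A: "A \<subseteq> E - X"
  shows "rk (contract M X) A = r (A \<union> X) - r X"
  unfolding rk_def[of "contract M X"] ind_contract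
proof (rule Max_eqI)
  show "finite (card ` {I. I \<subseteq> A \<and> I \<subseteq> E - X \<and> r (I \<union> X) = card I + r X})"
  proof (rule finite_imageI, rule finite_subset)
    show "{I. I \<subseteq> A \<and> I \<subseteq> E - X \<and> r (I \<union> X) = card I + r X} \<subseteq> Pow E" using A by blast
  qed (simp add: finite_ground)
next
  fix c assume "c \<in> card ` {I. I \<subseteq> A \<and> I \<subseteq> E - X \<and> r (I \<union> X) = card I + r X}"
  then obtain I where I: "I \<subseteq> A" "r (I \<union> X) = card I + r X" "c = card I" by blast
  moreover have "r (I \<union> X) \<le> r (A \<union> X)" using I(1) by (intro rk_mono) blast
  ultimately show "c \<le> r (A \<union> X) - r X" by linarith
next
  obtain B where B: "B \<subseteq> X" "ind M B" "card B = r X" by (rule obtain_ind_card_rk)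
  obtain J where J: "B \<subseteq> J" "J \<subseteq> A \<union> X" "ind M J" "card J = r (A \<union> X)"
    using ind_extend_to_rk[OF B(2), of "A \<union> X"] B(1) by blast
  have fJ: "finite J" using J(3) ind_finite by blast
  have "card (J \<inter> X) \<le> card B" using card_le_rk[of "J \<inter> X" X] ind_subset[OF J(3)] B(3) by auto
  then have JX: "J \<inter> X = B" using B(1) J(1) fJ card_seteq[of "J \<inter> X" B] by blast
  let ?I = "J \<inter> A"
  have J_split: "J = ?I \<union> B" "?I \<inter> B = {}" using J(2) JX A by auto
  then have cJ: "card J = card ?I + r X"
    using fJ B(3) card_Un_disjoint[of ?I B] by (metis finite_Un)
  have "card J \<le> r (?I \<union> X)" using card_le_rk[of J "?I \<union> X"] J(3) J_split B(1) by blast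
  moreover have "r (?I \<union> X) \<le> card ?I + r X" using rk_subadd[of ?I X] rk_le_card[of ?I] fJ by simp
  ultimately have "r (?I \<union> X) = card ?I + r X" using cJ by linarith
  moreover have "r (A \<union> X) - r X = card ?I" using cJ J(4) by simp
  ultimately show "r (A \<union> X) - r X \<in> card ` {I. I \<subseteq> A \<and> I \<subseteq> E - X \<and> r (I \<union> X) = card I + r X}"
    using A by blast
qed

lemma contract_contract:
  assumes "X \<subseteq> E" "Y \<subseteq> E - X"
  shows "contract (contract M X) Y = contract M (X \<union> Y)"
proof (rule matroid_eqI)
  show "gr (contract (contract M X) Y) = gr (contract M (X \<union> Y))" by auto
  fix I
  have "rk (contract M X) (I \<union> Y) = card I + rk (contract M X) Y \<longleftrightarrow>
      r (I \<union> (X \<union> Y)) = card I + r (X \<union> Y)" if "I \<subseteq> E - X - Y"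
  proof -
    have IY: "I \<union> Y \<subseteq> E - X" using that assms(2) by blast
    have e: "I \<union> Y \<union> X = I \<union> (X \<union> Y)" "Y \<union> X = X \<union> Y" by blast+
    have "r X \<le> r (X \<union> Y)" "r (X \<union> Y) \<le> r (I \<union> (X \<union> Y))" by (auto intro: rk_mono)
    then show ?thesis
      using rk_contract[OF assms(1) IY] rk_contract[OF assms] unfolding e by linarith
  qed
  then show "ind (contract (contract M X) Y) I \<longleftrightarrow> ind (contract M (X \<union> Y)) I"
    by (auto simp: ind_contract)
qed

lemma minor_on_contract:
  "X \<subseteq> E \<Longrightarrow> K \<subseteq> E - X \<Longrightarrow> minor_on (contract M X) K G = minor_on M (X \<union> K) G"
  unfolding minor_on_def by (simp add: contract_contract Diff_eq Int_ac)

lemma rk_minor_on: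
  "K \<subseteq> E \<Longrightarrow> Z \<subseteq> (E - K) \<inter> G \<Longrightarrow> rk (minor_on M K G) Z = r (Z \<union> K) - r K"
  unfolding minor_on_def by (subst rk_delete) (auto intro: rk_contract)

lemma minor_of_minor_on:
  assumes K: "K \<subseteq> E" and N: "is_minor N (minor_on M K G)"
  obtains K' G' where "K \<subseteq> K'" "K' \<subseteq> E" "G' \<subseteq> E - K'" "N = minor_on M K' G'"
proof -
  obtain C D where CD: "C \<subseteq> (E - K) \<inter> G" "D \<subseteq> (E - K) \<inter> G" "C \<inter> D = {}"
    and N_eq: "N = delete (contract (minor_on M K G) C) D"
    using N unfolding is_minor_def by auto
  let ?G' = "(E - K) \<inter> G - C - D"
  have "N = minor_on M (K \<union> C) ?G'"
  proof (rule matroid_eqI)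
    show "gr N = gr (minor_on M (K \<union> C) ?G')" using N_eq by auto
    fix I
    have "rk (minor_on M K G) (I \<union> C) = card I + rk (minor_on M K G) C \<longleftrightarrow>
        r (I \<union> (K \<union> C)) = card I + r (K \<union> C)" if "I \<subseteq> ?G'"
    proof -
      have IC: "I \<union> C \<subseteq> (E - K) \<inter> G" using that CD by blast
      have e: "I \<union> C \<union> K = I \<union> (K \<union> C)" "C \<union> K = K \<union> C" by blast+
      have "r K \<le> r (K \<union> C)" "r (K \<union> C) \<le> r (I \<union> (K \<union> C))" by (auto intro: rk_mono)
      then show ?thesis
        using rk_minor_on[OF K IC] rk_minor_on[OF K CD(1)] unfolding e by linarith
    qed
    moreover have "ind N I \<longleftrightarrow> I \<subseteq> ?G' \<and> rk (minor_on M K G) (I \<union> C) = card I + rk (minor_on M K G) C"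
      using N_eq by (auto simp: ind_delete ind_contract)
    moreover have "ind (minor_on M (K \<union> C) ?G') I \<longleftrightarrow> I \<subseteq> ?G' \<and> r (I \<union> (K \<union> C)) = card I + r (K \<union> C)"
      using K by (auto simp: ind_minor_on)
    ultimately show "ind N I \<longleftrightarrow> ind (minor_on M (K \<union> C) ?G') I" by blast
  qed
  then show ?thesis using that[of "K \<union> C" ?G'] K CD by blast
qed

lemma has_minor_contract_transfer:
  assumes X: "X \<subseteq> E" and x: "x \<in> E" and K0: "K0 \<subseteq> E - {x}"
    and f_inj: "inj_on f (E - X)" and f_into: "f ` (E - X) \<subseteq> E - insert x K0"
    and f_rk: "\<And>Z. Z \<subseteq> E - X \<Longrightarrow> r (f ` Z \<union> insert x K0) = r (Z \<union> X)"
    and N: "has_minor (minor_on M X S) N"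
  shows "has_minor (contract M {x}) N"
proof -
  obtain N0 where N0: "is_minor N0 (minor_on M X S)" "iso N0 N"
    using N unfolding has_minor_def by blast
  obtain K G where KG: "X \<subseteq> K" "K \<subseteq> E" "G \<subseteq> E - K" and N0_eq: "N0 = minor_on M K G"
    using minor_of_minor_on[OF X N0(1)] by blast
  let ?C = "K - X"
  let ?K' = "f ` ?C \<union> K0"
  have C: "?C \<subseteq> E - X" and G: "G \<subseteq> E - X" using KG by auto
  have K': "?K' \<subseteq> E - {x}" using f_into C K0 by blast
  have "f ` G \<inter> f ` ?C = {}"
    using inj_on_image_Int[OF f_inj G C] KG by blast
  then have fG: "f ` G \<subseteq> E - ({x} \<union> ?K')" using f_into G by blast
  have "iso (minor_on M K G) (minor_on M ({x} \<union> ?K') (f ` G))"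
  proof (rule iso_minor_on)
    show "inj_on f G" using f_inj G by (rule inj_on_subset)
    fix I assume I: "I \<subseteq> G"
    have "f ` I \<union> ({x} \<union> ?K') = f ` (I \<union> ?C) \<union> insert x K0" by blast
    moreover have "I \<union> ?C \<union> X = I \<union> K" using KG by blast
    moreover have "I \<union> ?C \<subseteq> E - X" using I G C by blast
    ultimately show "r (f ` I \<union> ({x} \<union> ?K')) = r (I \<union> K)" using f_rk by metis
  qed (use KG fG in auto)
  moreover have "minor_on M ({x} \<union> ?K') (f ` G) = minor_on (contract M {x}) ?K' (f ` G)"
    using minor_on_contract[of "{x}" ?K'] x K' by simp
  moreover have "is_minor (minor_on (contract M {x}) ?K' (f ` G)) (contract M {x})"
    using K' by (intro is_minor_minor_on) simp
  ultimately show ?thesis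
    unfolding has_minor_def using N0(2) N0_eq iso_sym iso_trans by metis
qed

lemma rk_add_ge_if_3_connected:
  assumes "n_connected M 3" "P \<union> Q = E" "P \<inter> Q = {}" "2 \<le> card P" "2 \<le> card Q"
  shows "r E + 2 \<le> r P + r Q"
proof -
  have "\<not> separation M 2 P Q" using assms(1) unfolding n_connected_def by auto
  then show ?thesis using assms(2-) unfolding separation_def by auto
qed

lemma rk_singleton_simple: "simple M \<Longrightarrow> a \<in> E \<Longrightarrow> r {a} = 1"
  using ind_iff_rk[of "{a}"] unfolding simple_def by auto

lemma rk_pair_simple: "simple M \<Longrightarrow> a \<in> E \<Longrightarrow> b \<in> E \<Longrightarrow> a \<noteq> b \<Longrightarrow> r {a, b} = 2"
  using ind_iff_rk[of "{a, b}"] unfolding simple_def by auto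

text \<open>A 1- or 2-separation \<open>(A, B)\<close> of \<open>M / x\<close> yields the separations \<open>(A, B + x)\<close> and
  \<open>(A + x, B)\<close> of \<open>M\<close>; 3-connectivity of \<open>M\<close> leaves only 2-separations with \<open>x\<close> spanned by both
  sides.\<close>
lemma separation_contract_single:
  assumes conn: "n_connected M 3" and rk_ge_4: "4 \<le> r E"
    and x: "x \<in> E" "r {x} = 1"
    and sep: "separation (contract M {x}) k A B" and k: "1 \<le> k" "k < 3"
  shows "k = 2" "2 \<le> card A" "2 \<le> card B"
    and "r (A \<union> {x}) = r A" "r (B \<union> {x}) = r B" "r A + r B \<le> r E + 2"
proof -
  have part: "A \<union> B = E - {x}" "A \<inter> B = {}" and cards: "k \<le> card A" "k \<le> card B"
    and rk_sep: "rk (contract M {x}) A + rk (contract M {x}) B + 1 \<le> rk (contract M {x}) (E - {x}) + k"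
    using sep unfolding separation_def by auto
  have rk_contract_x: "rk (contract M {x}) Z = r (Z \<union> {x}) - 1" if "Z \<subseteq> E - {x}" for Z
    using rk_contract[of "{x}" Z] that x by simp
  have pos: "1 \<le> r (Z \<union> {x})" for Z using rk_mono[of "{x}" "Z \<union> {x}"] x(2) by simp
  have E_x: "(E - {x}) \<union> {x} = E" using x by blast
  then have "rk (contract M {x}) (E - {x}) = r E - 1" using rk_contract_x[of "E - {x}"] by simp
  moreover have "1 \<le> r E" using pos[of "E - {x}"] unfolding E_x .
  moreover have "A \<subseteq> E - {x}" "B \<subseteq> E - {x}" using part by auto
  ultimately have main: "r (A \<union> {x}) + r (B \<union> {x}) \<le> r E + k"
    using rk_sep rk_contract_x[of A] rk_contract_x[of B] pos[of A] pos[of B] by simp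
  have mono: "r A \<le> r (A \<union> {x})" "r B \<le> r (B \<union> {x})" by (auto intro: rk_mono)
  have fin: "finite A" "finite B" "x \<notin> A" "x \<notin> B"
    using part finite_subset[OF _ finite_ground] by auto
  have A_sep: "r E + 2 \<le> r A + r (B \<union> {x})" if "2 \<le> card A"
    using rk_add_ge_if_3_connected[OF conn _ _ that, of "B \<union> {x}"] part x(1) fin cards k by auto
  have B_sep: "r E + 2 \<le> r (A \<union> {x}) + r B" if "2 \<le> card B"
    using rk_add_ge_if_3_connected[OF conn _ _ _ that, of "A \<union> {x}"] part x(1) fin cards k by auto
  have "2 \<le> card A \<or> 2 \<le> card B"
  proof (rule ccontr)
    assume "\<not> ?thesis"
    then have "card A + card B \<le> 2" by linarith
    moreover have "card E \<le> card A + card B + 1"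
    proof -
      have "E = A \<union> (B \<union> {x})" using part x(1) by blast
      then show ?thesis using card_Un_le[of A "B \<union> {x}"] fin by simp
    qed
    ultimately have "card E \<le> 3" by linarith
    then show False using rk_le_card[OF finite_ground] rk_ge_4 by linarith
  qed
  then show k2: "k = 2" using A_sep B_sep main mono k by linarith
  then show "2 \<le> card A" "2 \<le> card B" using cards by auto
  then show eA: "r (A \<union> {x}) = r A" and eB: "r (B \<union> {x}) = r B"
    using A_sep B_sep main mono k2 by linarith+
  then show "r A + r B \<le> r E + 2" using main k2 by linarith
qed

end

section \<open>Caramboles\<close>

lemma transpose_image_insert:
  "a \<in> Z \<Longrightarrow> b \<notin> Z \<Longrightarrow> transpose a b ` Z = insert b (Z - {a})"
  by (auto simp: in_transpose_image_iff transpose_def)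

locale carambole_setting = matroid M for M :: "'a matroid" +
  fixes n :: nat and x y :: "nat \<Rightarrow> 'a"
  assumes three_connected: "n_connected M 3" and simple: "simple M" and rk_ge_4: "4 \<le> rk M (gr M)"
    and n_ge_3: "3 \<le> n" and x_in: "\<And>i. i < n \<Longrightarrow> x i \<in> gr M" and y_in: "\<And>i. i < n \<Longrightarrow> y i \<in> gr M"
    and inj_y: "inj_on y {..<n}" and rk_line: "rk M (y ` {..<n}) = 2"
    and cocircuit_carambole: "\<And>i. i < n \<Longrightarrow> cocircuit M ((y ` {..<n} - {y i}) \<union> {x i})"
begin

abbreviation "L \<equiv> y ` {..<n}"

definition cocirc :: "nat \<Rightarrow> 'a set" where
  "cocirc i = (L - {y i}) \<union> {x i}"

lemma cocircuit_cocirc: "i < n \<Longrightarrow> cocircuit M (cocirc i)"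
  unfolding cocirc_def by (rule cocircuit_carambole)

lemma line_subset_ground: "L \<subseteq> E"
  using y_in by blast

lemma card_line: "card L = n"
  using inj_y by (simp add: card_image)

lemma y_eq_iff: "i < n \<Longrightarrow> j < n \<Longrightarrow> y i = y j \<longleftrightarrow> i = j"
  using inj_y unfolding inj_on_def by blast

lemma rk_union_line:
  assumes "a \<in> Z \<inter> L" "b \<in> Z \<inter> L" "a \<noteq> b"
  shows "r (Z \<union> L) = r Z"
proof -
  have "r (Z \<union> L) + r (Z \<inter> L) \<le> r Z + r L" by (rule rk_submod)
  moreover have "r {a, b} \<le> r (Z \<inter> L)" using assms by (intro rk_mono) auto
  moreover have "r {a, b} = 2" using assms line_subset_ground simple by (intro rk_pair_simple) auto
  moreover have "r Z \<le> r (Z \<union> L)" by (rule rk_mono) auto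
  ultimately show ?thesis using rk_line by linarith
qed

lemma rk_compl_line: "r (E - L) = r E"
proof (rule ccontr)
  assume "r (E - L) \<noteq> r E"
  then have less: "r (E - L) < r E" using rk_mono[of "E - L" E] by simp
  have "r E \<le> r L + r (E - L)" using rk_subadd[of L "E - L"] line_subset_ground by (simp add: Un_absorb1)
  moreover have "r (E - L) \<le> card (E - L)" using finite_ground by (intro rk_le_card) auto
  ultimately have "2 \<le> card (E - L)" using rk_ge_4 rk_line by linarith
  then have "r E + 2 \<le> r L + r (E - L)"
    using rk_add_ge_if_3_connected[OF three_connected, of L "E - L"] line_subset_ground card_line n_ge_3
    by auto
  then show False using less rk_line by linarith
qed

lemma card_compl_line_ge_4: "4 \<le> card (E - L)"
  using rk_le_card[of "E - L"] finite_ground rk_compl_line rk_ge_4 by simp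

lemma x_notin_line: "i < n \<Longrightarrow> x i \<notin> L"
proof
  assume i: "i < n" and "x i \<in> L"
  then have "r (E - L) \<le> r (E - cocirc i)" unfolding cocirc_def by (intro rk_mono) blast
  then show False using rk_compl_cocircuit_less[OF cocircuit_cocirc[OF i]] rk_compl_line by simp
qed

lemma ind_hull: "ind M (x ` {..<n})"
proof (rule ind_if_cocircuits_meet_singly)
  show "x ` {..<n} \<subseteq> E" using x_in by blast
  fix z assume "z \<in> x ` {..<n}"
  then obtain i where i: "i < n" "z = x i" by blast
  have "cocirc i \<inter> x ` {..<n} = {z}"
    using i x_notin_line unfolding cocirc_def by auto
  then show "\<exists>C. cocircuit M C \<and> C \<inter> x ` {..<n} = {z}"
    using cocircuit_cocirc[OF i(1)] by blast
qed

text \<open>Otherwise \<open>(A \<union> L + x\<^sub>i, B - L)\<close> is a 2-separation of \<open>M\<close>.\<close>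
lemma card_off_line_le_1:
  assumes i: "i < n" and part: "A \<union> B = E - {x i}" "A \<inter> B = {}"
    and spanA: "r (A \<union> {x i}) = r A" and rk_sum: "r A + r (B \<union> {x i}) \<le> r E + 2"
    and ab: "a \<in> A \<inter> L" "b \<in> A \<inter> L" "a \<noteq> b"
  shows "card (B - L) \<le> 1"
proof (rule ccontr)
  assume "\<not> card (B - L) \<le> 1"
  then have card_B': "2 \<le> card (B - L)" by simp
  let ?A' = "A \<union> L \<union> {x i}"
  have part': "?A' \<union> (B - L) = E" "?A' \<inter> (B - L) = {}"
    using part x_in[OF i] line_subset_ground by auto
  have "finite ?A'" using part' finite_ground by (metis finite_Un)
  then have card_A': "2 \<le> card ?A'" using ab card_mono[of ?A' "{a, b}"] by auto
  have "r ?A' + r ((A \<union> L) \<inter> (A \<union> {x i})) \<le> r (A \<union> L) + r (A \<union> {x i})"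
    using rk_submod[of "A \<union> L" "A \<union> {x i}"] by (simp add: Un_ac)
  moreover have "r A \<le> r ((A \<union> L) \<inter> (A \<union> {x i}))" by (rule rk_mono) blast
  ultimately have "r ?A' \<le> r A" using rk_union_line[OF ab] spanA by linarith
  moreover have "r E + 2 \<le> r ?A' + r (B - L)"
    using rk_add_ge_if_3_connected[OF three_connected part' card_A' card_B'] .
  moreover have "r (insert (x i) (B - L)) = Suc (r (B - L))"
    using rk_insert_cocircuit[OF cocircuit_cocirc[OF i], of "B - L" "x i"] part
    unfolding cocirc_def by blast
  moreover have "r (insert (x i) (B - L)) \<le> r (B \<union> {x i})" by (rule rk_mono) blast
  ultimately show False using rk_sum by linarith
qed

lemma rk_compl_line_hull_pair_le:
  assumes i: "i < n" and k: "k < n" "k \<noteq> i" and T: "x i \<in> T" "x k \<in> T"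
  shows "r (E - L - T) + 2 \<le> r E"
proof -
  let ?Q = "E - L - T"
  have y: "y i \<in> E" "y k \<in> E" "y i \<in> cocirc k" "y k \<in> cocirc i"
    using y_in i k y_eq_iff unfolding cocirc_def by auto
  have Q: "?Q \<subseteq> E" "insert (y i) ?Q \<subseteq> E" using y(1) by auto
  have disj: "?Q \<inter> cocirc k = {}" "insert (y i) ?Q \<inter> cocirc i = {}"
    using T i x_notin_line unfolding cocirc_def by auto
  have "r (insert (y i) ?Q) = Suc (r ?Q)"
    using Q(1) disj(1) by (rule rk_insert_cocircuit[OF cocircuit_cocirc[OF k(1)] _ _ y(3)])
  moreover have "r (insert (y k) (insert (y i) ?Q)) = Suc (r (insert (y i) ?Q))"
    using Q(2) disj(2) by (rule rk_insert_cocircuit[OF cocircuit_cocirc[OF i] _ _ y(4)])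
  moreover have "r (insert (y k) (insert (y i) ?Q)) \<le> r E"
    using Q(2) y(2) by (intro rk_mono) simp
  ultimately show ?thesis by simp
qed

text \<open>A third cocircuit \<open>C\<^sub>k\<close> cannot meet the triangle in \<open>y\<^sub>j\<close> alone, which forces
  \<open>x\<^sub>k \<in> {x\<^sub>i, b}\<close>; then \<open>(L \<union> {x\<^sub>i, b}, E - L - {x\<^sub>i, b})\<close> is a 2-separation.\<close>
lemma rk_triangle_ge_3:
  assumes i: "i < n" and j: "j < n" "j \<noteq> i" and b: "b \<in> E" "b \<notin> L" "b \<noteq> x i"
  shows "3 \<le> r {y j, b, x i}"
proof (rule ccontr)
  assume "\<not> 3 \<le> r {y j, b, x i}"
  then have triangle: "r {y j, b, x i} \<le> 2" by simp
  have "\<exists>k::nat. k < 3 \<and> k \<noteq> i \<and> k \<noteq> j" by presburger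
  then obtain k where k: "k < n" "k \<noteq> i" "k \<noteq> j" using n_ge_3 by (meson less_le_trans)
  have x_i: "x i \<in> E" "x i \<notin> L" using x_in[OF i] x_notin_line[OF i] by auto
  have y_j: "y j \<in> E" "y j \<noteq> y i" "y j \<noteq> y k" using y_in[OF j(1)] y_eq_iff i j k by auto
  have x_k: "x k = x i \<or> x k = b"
  proof (rule ccontr)
    assume "\<not> ?thesis"
    then have "{x i, b} \<inter> cocirc k = {}" using x_i b unfolding cocirc_def by auto
    then have "r (insert (y j) {x i, b}) = Suc (r {x i, b})"
      using rk_insert_cocircuit[OF cocircuit_cocirc[OF k(1)]] x_i b y_j j unfolding cocirc_def by auto
    moreover have "r {x i, b} = 2" using rk_pair_simple[OF simple] x_i b by auto
    moreover have "insert (y j) {x i, b} = {y j, b, x i}" by blast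
    ultimately show False using triangle by simp
  qed
  let ?P = "L \<union> {x i, b}" and ?Q = "E - L - {x i, b}"
  have rk_Q: "r ?Q + 2 \<le> r E" using rk_compl_line_hull_pair_le[OF i k(1,2)] x_k by auto
  have "{y j, b, x i} \<union> L = ?P" "{y j, b, x i} \<inter> L = {y j}" using j b x_i by auto
  then have "r ?P + r {y j} \<le> r {y j, b, x i} + r L" using rk_submod[of "{y j, b, x i}" L] by simp
  then have rk_P: "r ?P \<le> 3" using triangle rk_line rk_singleton_simple[OF simple y_j(1)] by linarith
  have part: "?P \<union> ?Q = E" "?P \<inter> ?Q = {}" using line_subset_ground x_i b by auto
  have "2 \<le> card ?P" using card_line n_ge_3 card_mono[of ?P L] by force
  moreover have "2 \<le> card ?Q"
  proof (rule ccontr)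
    assume "\<not> ?thesis"
    have "E - L \<subseteq> ?Q \<union> {x i, b}" by blast
    then have "card (E - L) \<le> card ?Q + card {x i, b}"
      using card_mono[of "?Q \<union> {x i, b}" "E - L"] card_Un_le[of ?Q "{x i, b}"] finite_ground by auto
    moreover have "card {x i, b} \<le> 2" by (cases "x i = b") auto
    ultimately show False using \<open>\<not> 2 \<le> card ?Q\<close> card_compl_line_ge_4 by linarith
  qed
  ultimately show False
    using rk_add_ge_if_3_connected[OF three_connected part] rk_P rk_Q by linarith
qed

lemma card_line_inter_le_1:
  assumes i: "i < n" and part: "A \<union> B = E - {x i}" "A \<inter> B = {}"
    and card_B: "2 \<le> card B"
    and spanA: "r (A \<union> {x i}) = r A" and spanB: "r (B \<union> {x i}) = r B"
    and rk_sum: "r A + r B \<le> r E + 2"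
  shows "card (A \<inter> L) \<le> 1"
proof (rule ccontr)
  assume "\<not> card (A \<inter> L) \<le> 1"
  have fin: "finite A" "finite B" using part finite_subset[OF _ finite_ground] by auto
  obtain a b where ab: "a \<in> A \<inter> L" "b \<in> A \<inter> L" "a \<noteq> b"
    using \<open>\<not> card (A \<inter> L) \<le> 1\<close> card_le_Suc0_iff_eq[of "A \<inter> L"] fin by auto
  have off_B: "card (B - L) \<le> 1" using card_off_line_le_1[OF i part spanA _ ab] rk_sum spanB by simp
  have "B \<inter> (cocirc i - {x i}) \<noteq> {}"
    using cocircuit_meets_if_rk_insert_eq[OF cocircuit_cocirc[OF i], of "x i" B] part spanB
    unfolding cocirc_def by auto
  then obtain j where j: "j < n" "j \<noteq> i" "y j \<in> B"
    using x_notin_line[OF i] unfolding cocirc_def by auto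
  show False
  proof (cases "card (B \<inter> L) \<le> 1")
    case False
    then obtain a' b' where ab': "a' \<in> B \<inter> L" "b' \<in> B \<inter> L" "a' \<noteq> b'"
      using card_le_Suc0_iff_eq[of "B \<inter> L"] fin by auto
    have off_A: "card (A - L) \<le> 1"
      using card_off_line_le_1[OF i _ _ spanB _ ab'] part rk_sum spanA by (simp add: Un_commute Int_commute)
    have "E - L \<subseteq> (A - L) \<union> (B - L) \<union> {x i}" using part by blast
    then have "card (E - L) \<le> card (A - L) + card (B - L) + 1"
      using card_mono[of "(A - L) \<union> (B - L) \<union> {x i}" "E - L"] fin
        card_Un_le[of "(A - L) \<union> (B - L)" "{x i}"] card_Un_le[of "A - L" "B - L"] by auto
    then show False using off_A off_B card_compl_line_ge_4 by linarith
  next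
    case True
    have B_L: "B \<inter> L = {y j}"
      using True j fin card_le_Suc0_iff_eq[of "B \<inter> L"] by auto
    have "card B \<le> card (B \<inter> L) + card (B - L)"
      using card_Un_le[of "B \<inter> L" "B - L"] by (simp add: Int_Diff_Un)
    then have "card (B - L) = 1" using off_B card_B B_L by simp
    then obtain b where "B - L = {b}" by (auto simp: card_1_singleton_iff)
    then have B: "B = {y j, b}" and b: "b \<in> E" "b \<notin> L" "b \<noteq> x i"
      using B_L part by auto
    have "r {y j, b, x i} = r B" using spanB B by (simp add: insert_commute)
    also have "\<dots> \<le> card B" using fin(2) by (rule rk_le_card)
    also have "\<dots> \<le> 2" using B by (simp add: card_insert_if)
    finally show False using rk_triangle_ge_3[OF i j(1,2) b] by simp
  qed
qed

lemma n_connected_contract_hull: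
  assumes i: "i < n"
  shows "n_connected (contract M {x i}) 3"
  unfolding n_connected_def
proof (intro allI impI notI)
  fix k :: nat assume "1 \<le> k \<and> k < 3"
  then have k: "1 \<le> k" "k < 3" by auto
  assume "\<exists>A B. separation (contract M {x i}) k A B"
  then obtain A B where sep: "separation (contract M {x i}) k A B" by blast
  have x_i: "x i \<in> E" "r {x i} = 1"
    using x_in[OF i] rk_singleton_simple[OF simple] by auto
  note facts = separation_contract_single[OF three_connected rk_ge_4 x_i sep k]
  have part: "A \<union> B = E - {x i}" "A \<inter> B = {}"
    using sep unfolding separation_def by auto
  have part': "B \<union> A = E - {x i}" "B \<inter> A = {}" using part by auto
  have rk_sum': "r B + r A \<le> r E + 2" using facts(6) by linarith
  have "L \<subseteq> E - {x i}" using line_subset_ground x_notin_line[OF i] by blast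
  then have "(A \<inter> L) \<union> (B \<inter> L) = L" using part(1) by blast
  then have "card L \<le> card (A \<inter> L) + card (B \<inter> L)"
    using card_Un_le[of "A \<inter> L" "B \<inter> L"] by simp
  moreover have "card (A \<inter> L) \<le> 1"
    using card_line_inter_le_1[OF i part facts(3) facts(4) facts(5) facts(6)] .
  moreover have "card (B \<inter> L) \<le> 1"
    using card_line_inter_le_1[OF i part' facts(2) facts(5) facts(4) rk_sum'] .
  ultimately show False using card_line n_ge_3 by linarith
qed

text \<open>Contracting the pair \<open>{y\<^sub>i, x\<^sub>i}\<close> has the same effect on ranks as contracting the line,
  once \<open>x\<^sub>i\<close> is renamed to another point \<open>y\<^sub>j\<close> of the line.\<close>
lemma rk_transpose_line:
  assumes i: "i < n" and j: "j < n" "j \<noteq> i" and Z: "Z \<subseteq> E - L"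
  shows "r (transpose (x i) (y j) ` Z \<union> {y i, x i}) = r (Z \<union> L)"
proof -
  have y: "y i \<in> L" "y j \<in> L" "y i \<noteq> y j" "y j \<notin> Z" using i j Z y_eq_iff by auto
  have x_i: "x i \<notin> L" using x_notin_line[OF i] .
  have "r (Z \<union> {y i, y j} \<union> L) = r (Z \<union> {y i, y j})"
    using rk_union_line[of "y i" "Z \<union> {y i, y j}" "y j"] y by blast
  moreover have "Z \<union> {y i, y j} \<union> L = Z \<union> L" using y by blast
  ultimately have pair: "r (Z \<union> {y i, y j}) = r (Z \<union> L)" by simp
  show ?thesis
  proof (cases "x i \<in> Z")
    case True
    have "transpose (x i) (y j) ` Z \<union> {y i, x i} = Z \<union> {y i, y j}"
      using transpose_image_insert[OF True y(4)] True by blast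
    then show ?thesis using pair by simp
  next
    case False
    have "insert (y i) Z \<inter> cocirc i = {}" "insert (y i) Z \<subseteq> E"
      using Z False x_i y(1) line_subset_ground unfolding cocirc_def by auto
    then have "r (insert z (insert (y i) Z)) = Suc (r (insert (y i) Z))" if "z \<in> cocirc i" for z
      using rk_insert_cocircuit[OF cocircuit_cocirc[OF i]] that by blast
    then have "r (insert (x i) (insert (y i) Z)) = r (insert (y j) (insert (y i) Z))"
      using y unfolding cocirc_def by simp
    moreover have "transpose (x i) (y j) ` Z = Z" using False y(4) by simp
    ultimately show ?thesis using pair by (simp add: insert_commute)
  qed
qed

lemma has_minor_contract_hull:
  assumes i: "i < n" and N: "has_minor (minor_on M L S) N"
  shows "has_minor (contract M {x i}) N"
proof -
  have "\<exists>j::nat. j < 3 \<and> j \<noteq> i" by presburger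
  then obtain j where j: "j < n" "j \<noteq> i" using n_ge_3 by (meson less_le_trans)
  have x_i: "x i \<in> E" "x i \<notin> L" using x_in[OF i] x_notin_line[OF i] by auto
  have y: "y i \<in> L" "y j \<in> L" "y i \<noteq> y j" "y j \<in> E" using i j y_eq_iff y_in by auto
  show ?thesis
  proof (rule has_minor_contract_transfer[OF line_subset_ground x_i(1), of "{y i}" "transpose (x i) (y j)"])
    show "{y i} \<subseteq> E - {x i}" using y x_i line_subset_ground by auto
    show "transpose (x i) (y j) ` (E - L) \<subseteq> E - {x i, y i}"
      using x_i y by (auto simp: transpose_def)
    fix Z assume "Z \<subseteq> E - L"
    then show "r (transpose (x i) (y j) ` Z \<union> {x i, y i}) = r (Z \<union> L)"
      using rk_transpose_line[OF i j(1,2)] by (simp add: insert_commute)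
  qed (use N in simp_all)
qed

end

theorem proposition4p6:
  fixes M :: "'a matroid" and N :: "'b matroid"
  assumes "is_matroid M" and "n_connected M 3" and "simple M"
    and "is_matroid N" and "n_connected N 3" and "simple N" and "has_minor M N"
    and "rk M (gr M) \<ge> 4"
    and "carambole M N n x y"
  shows "ind M (hull n x) \<and> (\<forall>e\<in>hull n x. N_contractible M N e)"
proof -
  have car: "n \<ge> 3" "\<forall>i<n. x i \<in> gr M \<and> y i \<in> gr M" "inj_on y {..<n}"
    "rk M (y ` {..<n}) = 2" "vert_N_contractible M N (y ` {..<n})"
    "\<forall>i<n. cocircuit M ((y ` {..<n} - {y i}) \<union> {x i})"
    using assms(9) unfolding carambole_def by auto
  interpret carambole_setting M n x y
    by unfold_locales (use assms car in auto)
  obtain S where S: "has_minor (minor_on M (y ` {..<n}) S) N"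
    using car(5) unfolding vert_N_contractible_def restrict_contract_eq_minor_on by blast
  have "N_contractible M N (x i)" if "i < n" for i
    unfolding N_contractible_def
    using that x_in n_connected_contract_hull has_minor_contract_hull[OF that S] by blast
  then show ?thesis using ind_hull unfolding hull_def by blast
qed

end
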